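(* Let $R$ be a tolerance relation on $\{1,\ldots,n\}$ and $A(R)$ its tolerance algebra. The following are equivalent: (i) $A(R)$ is associative; (ii) $A(R)$ is power associative; (iii) $R$ is an equivalence relation.
   Context: A tolerance relation on a set $X$ is a reflexive and symmetric relation $R\subset X\times X$. For $R$ a tolerance relation on $\{1,\ldots,n\}$, the tolerance algebra $A(R)$ is the complex vector space with basis $\{E_{ij}:(i,j)\in R\}$, with bilinear product determined by $E_{ij}\star E_{kl}=\delta_{jk}E_{il}$ if $(i,l)\in R$ and $E_{ij}\star E_{kl}=0$ otherwise (i.e. matrix product followed by setting entries in positions not in $R$ to zero). An algebra is power associative if the subalgebra generated by any single element is associative. *)

theory Defs
  imports Complex_Main
begin

definition tolerance_rel :: "nat \<Rightarrow> (nat \<times> nat) set \<Rightarrow> bool" where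
  "tolerance_rel n R \<longleftrightarrow> R \<subseteq> {1..n} \<times> {1..n} \<and> refl_on {1..n} R \<and> sym R"

text \<open>Elements of A(R): complex n x n matrices (functions on indices) supported on R.
  The basis element E_ij corresponds to the indicator of (i,j).\<close>
definition tol_alg :: "nat \<Rightarrow> (nat \<times> nat) set \<Rightarrow> (nat \<Rightarrow> nat \<Rightarrow> complex) set" where
  "tol_alg n R = {a. \<forall>i j. (i, j) \<notin> R \<longrightarrow> a i j = 0}"

definition tol_mult :: "nat \<Rightarrow> (nat \<times> nat) set \<Rightarrow> (nat \<Rightarrow> nat \<Rightarrow> complex)
    \<Rightarrow> (nat \<Rightarrow> nat \<Rightarrow> complex) \<Rightarrow> (nat \<Rightarrow> nat \<Rightarrow> complex)" where
  "tol_mult n R a b = (\<lambda>i l. if (i, l) \<in> R then (\<Sum>j\<in>{1..n}. a i j * b j l) else 0)"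

definition tol_associative :: "nat \<Rightarrow> (nat \<times> nat) set \<Rightarrow> bool" where
  "tol_associative n R \<longleftrightarrow> (\<forall>a\<in>tol_alg n R. \<forall>b\<in>tol_alg n R. \<forall>c\<in>tol_alg n R.
      tol_mult n R (tol_mult n R a b) c = tol_mult n R a (tol_mult n R b c))"

inductive_set gen_subalg :: "nat \<Rightarrow> (nat \<times> nat) set \<Rightarrow> (nat \<Rightarrow> nat \<Rightarrow> complex)
    \<Rightarrow> (nat \<Rightarrow> nat \<Rightarrow> complex) set"
  for n R x where
  gen_base: "x \<in> gen_subalg n R x"
| gen_zero: "(\<lambda>i j. 0) \<in> gen_subalg n R x"
| gen_add: "a \<in> gen_subalg n R x \<Longrightarrow> b \<in> gen_subalg n R x \<Longrightarrow> (\<lambda>i j. a i j + b i j) \<in> gen_subalg n R x"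
| gen_smult: "a \<in> gen_subalg n R x \<Longrightarrow> (\<lambda>i j. c * a i j) \<in> gen_subalg n R x"
| gen_mult: "a \<in> gen_subalg n R x \<Longrightarrow> b \<in> gen_subalg n R x \<Longrightarrow> tol_mult n R a b \<in> gen_subalg n R x"

definition tol_power_associative :: "nat \<Rightarrow> (nat \<times> nat) set \<Rightarrow> bool" where
  "tol_power_associative n R \<longleftrightarrow> (\<forall>x\<in>tol_alg n R.
     \<forall>a\<in>gen_subalg n R x. \<forall>b\<in>gen_subalg n R x. \<forall>c\<in>gen_subalg n R x.
      tol_mult n R (tol_mult n R a b) c = tol_mult n R a (tol_mult n R b c))"

end

theory Submission
  imports Defs
begin

text \<open>If \<open>R\<close> is transitive, the truncation in the product never removes a nonzero entry of
  the matrix product of two elements supported on \<open>R\<close>, so \<open>A(R)\<close> is a subalgebra of the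
  full matrix algebra and hence associative. If transitivity fails at \<open>(i,j), (j,k) \<in> R\<close>
  with \<open>(i,k) \<notin> R\<close>, take \<open>x = E\<^sub>i\<^sub>j + E\<^sub>j\<^sub>i + E\<^sub>j\<^sub>k + E\<^sub>k\<^sub>j\<close>: then \<open>x\<^sup>2\<close> has diagonal
  entries \<open>1\<close> at \<open>i\<close> and \<open>2\<close> at \<open>j\<close>, but its \<open>(i,k)\<close> entry is truncated, so the \<open>(i,j)\<close>
  entries of \<open>x\<^sup>2 x\<close> and \<open>x x\<^sup>2\<close> are \<open>1\<close> and \<open>2\<close>.\<close>

lemma gen_subalg_subset_tol_alg:
  assumes "x \<in> tol_alg n R"
  shows "gen_subalg n R x \<subseteq> tol_alg n R"
proof
  fix a assume "a \<in> gen_subalg n R x"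
  then show "a \<in> tol_alg n R"
    by induction (use assms in \<open>auto simp: tol_alg_def tol_mult_def\<close>)
qed

lemma tol_associative_imp_power_associative:
  "tol_associative n R \<Longrightarrow> tol_power_associative n R"
  unfolding tol_associative_def tol_power_associative_def
  using gen_subalg_subset_tol_alg by blast

definition mat_mult :: "nat \<Rightarrow> (nat \<Rightarrow> nat \<Rightarrow> complex) \<Rightarrow> (nat \<Rightarrow> nat \<Rightarrow> complex)
    \<Rightarrow> (nat \<Rightarrow> nat \<Rightarrow> complex)" where
  "mat_mult n a b = (\<lambda>i l. \<Sum>j\<in>{1..n}. a i j * b j l)"

lemma mat_mult_assoc: "mat_mult n (mat_mult n a b) c = mat_mult n a (mat_mult n b c)"
  unfolding mat_mult_def
  by (auto simp: sum_distrib_left sum_distrib_right mult.assoc intro!: ext sum.swap)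

lemma tol_mult_eq_mat_mult:
  assumes "trans R" "a \<in> tol_alg n R" "b \<in> tol_alg n R"
  shows "tol_mult n R a b = mat_mult n a b"
proof (intro ext)
  fix i l
  show "tol_mult n R a b i l = mat_mult n a b i l"
  proof (cases "(i, l) \<in> R")
    case True
    then show ?thesis by (simp add: tol_mult_def mat_mult_def)
  next
    case False
    have "a i j * b j l = 0" for j
    proof (cases "(i, j) \<in> R \<and> (j, l) \<in> R")
      case True
      with \<open>trans R\<close> False show ?thesis by (meson transD)
    next
      case False
      with assms(2,3) show ?thesis by (auto simp: tol_alg_def)
    qed
    with False show ?thesis by (simp add: tol_mult_def mat_mult_def del: mult_eq_0_iff)
  qed
qed

lemma tol_mult_in_tol_alg: "tol_mult n R a b \<in> tol_alg n R"
  by (simp add: tol_alg_def tol_mult_def)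

lemma trans_imp_tol_associative:
  assumes "trans R"
  shows "tol_associative n R"
  unfolding tol_associative_def
  using tol_mult_eq_mat_mult[OF assms] tol_mult_in_tol_alg mat_mult_assoc by metis

lemma non_trans_path_not_power_associative:
  assumes tol: "tolerance_rel n R"
    and ij: "(i, j) \<in> R" and jk: "(j, k) \<in> R" and ik: "(i, k) \<notin> R"
  shows "\<exists>x\<in>tol_alg n R. tol_mult n R (tol_mult n R x x) x \<noteq> tol_mult n R x (tol_mult n R x x)"
proof -
  define x :: "nat \<Rightarrow> nat \<Rightarrow> complex"
    where "x = (\<lambda>p q. if (p, q) \<in> {(i, j), (j, i), (j, k), (k, j)} then 1 else 0)"
  have R_sub: "R \<subseteq> {1..n} \<times> {1..n}" and refl: "refl_on {1..n} R" and "sym R"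
    using tol by (auto simp: tolerance_rel_def)
  then have "(j, i) \<in> R" "(k, j) \<in> R" using ij jk by (auto dest: symD)
  then have x_in: "x \<in> tol_alg n R" using ij jk by (auto simp: tol_alg_def x_def)
  have range: "i \<in> {1..n}" "j \<in> {1..n}" "k \<in> {1..n}" using ij jk R_sub by auto
  have diag: "(i, i) \<in> R" "(j, j) \<in> R" using range refl by (auto dest: refl_onD)
  have distinct: "i \<noteq> j" "j \<noteq> k" "i \<noteq> k" using ij jk ik diag by auto
  have row_i: "x i m = (if m = j then 1 else 0)" for m
    using distinct by (auto simp: x_def)
  have col_j: "x m j = (if m = i then 1 else 0) + (if m = k then 1 else 0)" for m
    using distinct by (auto simp: x_def)
  have diag_i: "x i m * x m i = (if m = j then 1 else 0)" for m
    using distinct by (auto simp: x_def)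
  have diag_j: "x j m * x m j = (if m = i then 1 else 0) + (if m = k then 1 else 0)" for m
    using distinct by (auto simp: x_def)
  define y where "y = tol_mult n R x x"
  have "y i i = 1" and "y j j = 2"
    using diag range distinct by (simp_all add: y_def tol_mult_def diag_i diag_j sum.distrib)
  moreover have "y i k = 0"
    using ik by (simp add: y_def tol_mult_def)
  moreover have "y i m * x m j = (if m = i then y i i else 0) + (if m = k then y i k else 0)"
    and "x i m * y m j = (if m = j then y j j else 0)" for m
    using distinct by (simp_all add: col_j row_i distrib_left)
  ultimately have "tol_mult n R y x i j = 1" and "tol_mult n R x y i j = 2"
    using ij range distinct by (simp_all add: tol_mult_def sum.distrib)
  then have "tol_mult n R (tol_mult n R x x) x \<noteq> tol_mult n R x (tol_mult n R x x)"
    unfolding y_def by (metis one_neq_zero add_cancel_left_right one_add_one)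
  with x_in show ?thesis by blast
qed

lemma tol_power_associative_imp_trans:
  assumes "tolerance_rel n R" "tol_power_associative n R"
  shows "trans R"
proof (rule transI, rule ccontr)
  fix i j k assume "(i, j) \<in> R" "(j, k) \<in> R" "(i, k) \<notin> R"
  then obtain x where x: "x \<in> tol_alg n R"
    and "tol_mult n R (tol_mult n R x x) x \<noteq> tol_mult n R x (tol_mult n R x x)"
    using non_trans_path_not_power_associative[OF assms(1)] by blast
  moreover have "x \<in> gen_subalg n R x" "tol_mult n R x x \<in> gen_subalg n R x"
    by (auto intro: gen_base gen_mult)
  ultimately show False
    using assms(2) unfolding tol_power_associative_def by blast
qed

theorem proposition3p7:
  assumes "tolerance_rel n R"
  shows "(tol_associative n R \<longleftrightarrow> tol_power_associative n R)
       \<and> (tol_power_associative n R \<longleftrightarrow> equiv {1..n} R)"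
  using assms tol_power_associative_imp_trans trans_imp_tol_associative
    tol_associative_imp_power_associative
  by (auto simp: equiv_def tolerance_rel_def)

end
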